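(* Let $\delta>0$, $c>0$ and $a>0$ be deterministic constants. Let $(\Omega,\mathcal A,\mathbb P)$ carry a filtration $(\mathcal F_n)_{n\ge0}$, and let $(a_n)_{n\ge0}$ and $(\ell_n)_{n\ge0}$ be sequences of random variables with $a_n,\ell_n$ being $\mathcal F_n$-measurable, $a_n\ge 0$ uniformly bounded, $a_n\downarrow a$ almost surely, $\ell_0=1$, and $c\,\ell_n^\delta/a_n\in[0,1]$ for all $n$. Suppose that for each $n\ge0$, conditionally on $\mathcal F_n$, $\omega_{n+1}$ is a Bernoulli$(c\,\ell_n^\delta/a_n)$ random variable and, independently of it, $V_{n+1}$ has distribution function $\mathbb P\{V_{n+1}\le x\}=x^\delta$, $x\in[0,1]$ (both $\mathcal F_{n+1}$-measurable), and \[ \ell_{n+1}=\begin{cases}\ell_n V_{n+1}, & \omega_{n+1}=1,\\ \ell_n, & \omega_{n+1}=0.\end{cases} \] Then \[ \Big(\frac{c}{a}\,n\Big)^{1/\delta}\ell_n \xrightarrow{\mathcal D} \mathrm{Weibull}(\delta), \] and for every $\alpha>0$, \[ \lim_{n\to\infty}\mathbb E\Big[\Big(\frac{c}{a}\,n\Big)^{\alpha/\delta}\ell_n^\alpha\Big]=\frac{\alpha}{\delta}\,\Gamma\Big(\frac{\alpha}{\delta}\Big). \]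
   Context: For $\delta>0$, the Weibull$(\delta)$ distribution has distribution function $1-e^{-x^\delta}$ for $x>0$ and $0$ otherwise. $\Gamma$ is the Gamma function; $\xrightarrow{\mathcal D}$ denotes convergence in distribution. *)

theory Defs
  imports "HOL-Probability.Probability"
begin

definition weibull_cdf :: "real \<Rightarrow> real \<Rightarrow> real" where
  "weibull_cdf \<delta> x = (if x > 0 then 1 - exp (- (x powr \<delta>)) else 0)"

end

theory Submission
  imports Defs
begin

text \<open>
  The key observation is a one-step identity for the tail: for B in F n and y \<ge> 0,
    P(B, l (n+1) > y) = E[1 (B, l n > y) (1 - c y^\<delta> / a n)],
  because (y / l n)^\<delta> p n = c y^\<delta> / a n does not depend on l n.  Since a \<le> a n \<le> sup a n
  and a n \<rightarrow> a, iterating gives (1 - c y^\<delta> / a)^n \<le> P(l n > y) and exponential upper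
  bounds, so with y = x / s n, s n = (c n / a)^(1/\<delta>), the tail P(s n l n > x) tends to
  exp (- x^\<delta>) and is dominated by exp (- \<kappa> x^\<delta>) uniformly in n.  Weak convergence to the
  Weibull law and convergence of all moments (by the layer cake formula and dominated
  convergence) then follow from two general lemmas about tails.
\<close>

lemma less_powr_inverse_iff:
  fixes t u d :: real
  assumes "0 \<le> t" "0 \<le> u" "0 < d"
  shows "t < u powr (1 / d) \<longleftrightarrow> t powr d < u"
proof
  assume "t < u powr (1 / d)"
  then have "t powr d < (u powr (1 / d)) powr d" using assms by (intro powr_less_mono2) auto
  also have "\<dots> = u" using assms by (simp add: powr_powr)
  finally show "t powr d < u" .
next
  assume "t powr d < u"
  then have "(t powr d) powr (1 / d) < u powr (1 / d)" using assms by (intro powr_less_mono2) auto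
  then show "t < u powr (1 / d)" using assms by (simp add: powr_powr)
qed

lemma one_minus_le_exp_neg: "1 - x \<le> exp (- x)" for x :: real
  using exp_ge_add_one_self[of "- x"] by simp

text \<open>(n - k) / n tends to 1; used to absorb a finite burn-in period.\<close>
lemma ratio_shift_tendsto_1: "(\<lambda>n. (real n - k) / real n) \<longlonglongrightarrow> 1"
proof -
  have "(\<lambda>n. 1 - k / real n) \<longlonglongrightarrow> 1 - 0" by (intro tendsto_intros lim_const_over_n)
  moreover have "eventually (\<lambda>n. 1 - k / real n = (real n - k) / real n) sequentially"
    using eventually_gt_at_top[of "0::nat"] by eventually_elim (simp add: field_simps)
  ultimately show ?thesis by (simp add: tendsto_cong)
qed

section \<open>The power-law distribution on [0, 1]\<close>

text \<open>The law of U^(1/\<delta>) for U uniform on [0, 1], i.e. the distribution with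
  distribution function y^\<delta> on [0, 1], and its tail function.\<close>
definition power_law :: "real \<Rightarrow> real measure" where
  "power_law \<delta> = distr (restrict_space lborel {0..1}) borel (\<lambda>u. u powr (1 / \<delta>))"

definition power_tail :: "real \<Rightarrow> real \<Rightarrow> real" where
  "power_tail \<delta> t = (if t < 0 then 1 else if t \<le> 1 then 1 - t powr \<delta> else 0)"

lemma sets_power_law [measurable_cong, simp]: "sets (power_law \<delta>) = sets borel"
  by (simp add: power_law_def)

lemma emeasure_power_law:
  "B \<in> sets borel \<Longrightarrow> emeasure (power_law \<delta>) B = emeasure lborel {u\<in>{0..1}. u powr (1 / \<delta>) \<in> B}"
  unfolding power_law_def
  by (subst emeasure_distr)
     (auto simp: space_restrict_space emeasure_restrict_space
           intro!: arg_cong2[where f=emeasure] measurable_restrict_space1)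

lemma prob_space_power_law: "prob_space (power_law \<delta>)"
proof
  have "space (power_law \<delta>) = UNIV" by (simp add: power_law_def)
  moreover have "{u\<in>{0..1::real}. u powr (1 / \<delta>) \<in> UNIV} = {0..1}" by auto
  ultimately show "emeasure (power_law \<delta>) (space (power_law \<delta>)) = 1"
    by (simp add: emeasure_power_law del: atLeastAtMost_iff)
qed

lemma power_tail_nonneg: "0 < \<delta> \<Longrightarrow> 0 \<le> power_tail \<delta> t"
  by (auto simp: power_tail_def intro: powr_le1)

text \<open>The tail of power_law is power_tail; this characterises the law
  (see measure_eqI_lessThan).\<close>
lemma emeasure_power_law_greaterThan:
  assumes "0 < \<delta>"
  shows "emeasure (power_law \<delta>) {t<..} = ennreal (power_tail \<delta> t)"
proof -
  have "{u\<in>{0..1}. u powr (1 / \<delta>) \<in> {t<..}} =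
        (if t < 0 then {0..1} else if t \<le> 1 then {t powr \<delta><..1} else {})"
  proof (intro set_eqI iffI)
    fix u assume "u \<in> {u\<in>{0..1}. u powr (1 / \<delta>) \<in> {t<..}}"
    moreover from this have "u powr (1 / \<delta>) \<le> 1" using assms by (intro powr_le1) auto
    ultimately show "u \<in> (if t < 0 then {0..1} else if t \<le> 1 then {t powr \<delta><..1} else {})"
      using less_powr_inverse_iff[of t u \<delta>] assms by auto
  next
    fix u assume u: "u \<in> (if t < 0 then {0..1} else if t \<le> 1 then {t powr \<delta><..1} else {})"
    then have "0 \<le> u" by (auto split: if_splits intro: order.trans[OF powr_ge_zero] less_imp_le)
    then show "u \<in> {u\<in>{0..1}. u powr (1 / \<delta>) \<in> {t<..}}"
      using u less_powr_inverse_iff[of t u \<delta>] assms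
      by (auto split: if_splits intro: less_le_trans[OF _ powr_ge_zero])
  qed
  moreover have "0 \<le> t \<Longrightarrow> t \<le> 1 \<Longrightarrow> t powr \<delta> \<le> 1" using assms by (intro powr_le1) auto
  ultimately show ?thesis
    by (simp add: emeasure_power_law power_tail_def)
qed

section \<open>Moments from tails\<close>

lemma nn_integral_power_derivative:
  fixes \<beta> y :: real
  assumes b: "0 < \<beta>" and y: "0 \<le> y"
  shows "(\<integral>\<^sup>+u. ennreal (indicator {0..} u * \<beta> * u powr (\<beta> - 1)) * indicator {..<y} u \<partial>lborel)
           = ennreal (y powr \<beta>)"
proof -
  have "((\<lambda>u. \<beta> * u powr (\<beta> - 1)) has_integral (y powr \<beta> - 0 powr \<beta>)) {0..y}"
  proof (rule fundamental_theorem_of_calculus_interior)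
    show "continuous_on {0..y} (\<lambda>u. u powr \<beta>)"
      using b by (intro continuous_on_powr') (auto intro: continuous_intros)
    fix u assume "u \<in> {0<..<y}"
    then show "((\<lambda>u. u powr \<beta>) has_vector_derivative \<beta> * u powr (\<beta> - 1)) (at u)"
      using has_real_derivative_powr[of u \<beta>]
      by (simp add: has_real_derivative_iff_has_vector_derivative)
  qed (use y in auto)
  then have "(\<integral>\<^sup>+u. ennreal (\<beta> * u powr (\<beta> - 1)) * indicator {0..y} u \<partial>lborel) = ennreal (y powr \<beta>)"
    using b by (intro nn_integral_has_integral_lebesgue') auto
  moreover have "(\<integral>\<^sup>+u. ennreal (indicator {0..} u * \<beta> * u powr (\<beta> - 1)) * indicator {..<y} u \<partial>lborel)
      = (\<integral>\<^sup>+u. ennreal (\<beta> * u powr (\<beta> - 1)) * indicator {0..y} u \<partial>lborel)"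
    using AE_lborel_singleton[of y]
    by (intro nn_integral_cong_AE) (auto elim!: eventually_mono simp: indicator_def)
  ultimately show ?thesis by simp
qed

text \<open>The layer cake formula: E[Y^\<beta>] is the integral of \<beta> u^(\<beta>-1) P(Y > u) over u \<ge> 0
  (Fubini applied to the previous lemma).\<close>
lemma layer_cake:
  fixes M :: "'a measure" and Y :: "'a \<Rightarrow> real"
  assumes "sigma_finite_measure M" and Y[measurable]: "Y \<in> borel_measurable M"
    and Y_nonneg: "AE x in M. 0 \<le> Y x" and b: "0 < \<beta>"
  shows "(\<integral>\<^sup>+x. ennreal (Y x powr \<beta>) \<partial>M)
       = (\<integral>\<^sup>+u. ennreal (indicator {0..} u * \<beta> * u powr (\<beta> - 1)) * emeasure M {x\<in>space M. u < Y x} \<partial>lborel)"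
proof -
  interpret sigma_finite_measure M by fact
  interpret P: pair_sigma_finite M lborel ..
  define g where "g u = ennreal (indicator {0..} u * \<beta> * u powr (\<beta> - 1))" for u :: real
  have [measurable]: "g \<in> borel_measurable borel" unfolding g_def by measurable
  have "(\<integral>\<^sup>+x. ennreal (Y x powr \<beta>) \<partial>M) = (\<integral>\<^sup>+x. (\<integral>\<^sup>+u. g u * indicator {..<Y x} u \<partial>lborel) \<partial>M)"
    using Y_nonneg
    by (intro nn_integral_cong_AE)
       (auto elim!: eventually_mono simp: nn_integral_power_derivative[OF b] g_def)
  also have "\<dots> = (\<integral>\<^sup>+u. (\<integral>\<^sup>+x. g u * indicator {..<Y x} u \<partial>M) \<partial>lborel)"
  proof (rule P.Fubini'[symmetric])
    have "(\<lambda>(x, u). g u * indicator {..<Y x} u) = (\<lambda>z. g (snd z) * (if snd z < Y (fst z) then 1 else 0))"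
      by (auto simp: indicator_def fun_eq_iff)
    also have "\<dots> \<in> borel_measurable (M \<Otimes>\<^sub>M lborel)" by measurable
    finally show "(\<lambda>(x, u). g u * indicator {..<Y x} u) \<in> borel_measurable (M \<Otimes>\<^sub>M lborel)" .
  qed
  also have "\<dots> = (\<integral>\<^sup>+u. g u * emeasure M {x\<in>space M. u < Y x} \<partial>lborel)"
  proof (intro nn_integral_cong)
    fix u :: real
    have "(\<integral>\<^sup>+x. g u * indicator {..<Y x} u \<partial>M) = (\<integral>\<^sup>+x. g u * indicator {x\<in>space M. u < Y x} x \<partial>M)"
      by (intro nn_integral_cong) (auto simp: indicator_def)
    also have "\<dots> = g u * emeasure M {x\<in>space M. u < Y x}"
      by (rule nn_integral_cmult_indicator) measurable
    finally show "(\<integral>\<^sup>+x. g u * indicator {..<Y x} u \<partial>M) = g u * emeasure M {x\<in>space M. u < Y x}" .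
  qed
  finally show ?thesis by (simp add: g_def)
qed

lemma nn_integral_gamma_kernel:
  fixes k \<beta> :: real
  assumes k: "0 < k" and b: "0 < \<beta>"
  shows "(\<integral>\<^sup>+u. ennreal (indicator {0..} u * u powr (\<beta> - 1) * exp (- (k * u))) \<partial>lborel)
       = ennreal (k powr (- \<beta>) * Gamma \<beta>)"
proof -
  define f where "f u = ennreal (indicator {0..} u * u powr (\<beta> - 1) * exp (- (k * u)))" for u :: real
  have [measurable]: "f \<in> borel_measurable borel" unfolding f_def by measurable
  have scale: "f (x / k)
      = ennreal (k powr (1 - \<beta>)) * ennreal (indicator {0..} x * x powr (\<beta> - 1) / exp x)" for x
  proof (cases "0 \<le> x")
    case True
    have "(x / k) powr (\<beta> - 1) = k powr (1 - \<beta>) * x powr (\<beta> - 1)"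
      using True k by (simp add: powr_divide powr_diff)
    then show ?thesis using True k
      by (simp add: f_def ennreal_mult[symmetric] exp_minus field_simps)
  next
    case False
    then have "x / k < 0" using k by (simp add: divide_neg_pos)
    then show ?thesis using False by (simp add: f_def indicator_def)
  qed
  have "(\<integral>\<^sup>+u. f u \<partial>lborel) = ennreal \<bar>1 / k\<bar> * (\<integral>\<^sup>+x. f (0 + (1 / k) * x) \<partial>lborel)"
    using k by (intro nn_integral_real_affine) auto
  also have "\<dots> = ennreal (1 / k) * (\<integral>\<^sup>+x. ennreal (k powr (1 - \<beta>))
      * ennreal (indicator {0..} x * x powr (\<beta> - 1) / exp x) \<partial>lborel)"
    using k by (simp add: scale)
  also have "\<dots> = ennreal (1 / k) * (ennreal (k powr (1 - \<beta>))
      * (\<integral>\<^sup>+x. ennreal (indicator {0..} x * x powr (\<beta> - 1) / exp x) \<partial>lborel))"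
    by (subst nn_integral_cmult) auto
  also have "\<dots> = ennreal (1 / k) * (ennreal (k powr (1 - \<beta>)) * ennreal (Gamma \<beta>))"
    using Gamma_conv_nn_integral_real[OF b] by simp
  also have "\<dots> = ennreal (k powr (- \<beta>) * Gamma \<beta>)"
    using k b by (simp add: ennreal_mult[symmetric] powr_diff powr_minus field_simps)
  finally show ?thesis by (simp add: f_def)
qed

lemma gamma_kernel_integrable_integral:
  fixes k \<beta> :: real
  assumes k: "0 < k" and b: "0 < \<beta>"
  shows "integrable lborel (\<lambda>u. indicator {0..} u * u powr (\<beta> - 1) * exp (- (k * u)))"
    and "(\<integral>u. indicator {0..} u * u powr (\<beta> - 1) * exp (- (k * u)) \<partial>lborel) = k powr (- \<beta>) * Gamma \<beta>"
proof -
  have nonneg: "AE u in lborel. 0 \<le> indicator {0..} u * u powr (\<beta> - 1) * exp (- (k * u))"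
    by (intro AE_I2) (auto simp: indicator_def)
  show "integrable lborel (\<lambda>u. indicator {0..} u * u powr (\<beta> - 1) * exp (- (k * u)))"
    by (rule integrableI_nn_integral_finite[OF _ nonneg nn_integral_gamma_kernel[OF k b]]) measurable
  show "(\<integral>u. indicator {0..} u * u powr (\<beta> - 1) * exp (- (k * u)) \<partial>lborel) = k powr (- \<beta>) * Gamma \<beta>"
    using nn_integral_gamma_kernel[OF k b] k b by (subst integral_eq_nn_integral[OF _ nonneg]) auto
qed

text \<open>The tail function of a random variable is antitone, hence Borel measurable.\<close>
lemma borel_measurable_tail:
  fixes M :: "'a measure" and Y :: "'a \<Rightarrow> real"
  assumes "finite_measure M" and [measurable]: "Y \<in> borel_measurable M"
  shows "(\<lambda>u. measure M {x\<in>space M. u < Y x}) \<in> borel_measurable borel"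
proof -
  interpret finite_measure M by fact
  have "mono (\<lambda>u. - measure M {x\<in>space M. u < Y x})"
    by (auto intro!: monoI finite_measure_mono)
  then have "(\<lambda>u. - (- measure M {x\<in>space M. u < Y x})) \<in> borel_measurable borel"
    by (intro borel_measurable_uminus borel_measurable_mono)
  then show ?thesis by simp
qed

lemma moment_eq_tail_integral:
  fixes M :: "'a measure" and Y :: "'a \<Rightarrow> real" and \<beta> :: real
  assumes "finite_measure M" and Y_meas[measurable]: "Y \<in> borel_measurable M"
    and Y_nonneg: "AE x in M. 0 \<le> Y x" and b: "0 < \<beta>"
    and int: "integrable lborel (\<lambda>u. indicator {0..} u * \<beta> * u powr (\<beta> - 1) * measure M {x\<in>space M. u < Y x})"
  shows "(\<integral>x. Y x powr \<beta> \<partial>M)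
       = (\<integral>u. indicator {0..} u * \<beta> * u powr (\<beta> - 1) * measure M {x\<in>space M. u < Y x} \<partial>lborel)"
    (is "_ = (\<integral>u. ?f u \<partial>lborel)")
proof -
  interpret finite_measure M by fact
  have f_nonneg: "0 \<le> ?f u" for u using b by (auto simp: indicator_def)
  have "(\<integral>\<^sup>+x. ennreal (Y x powr \<beta>) \<partial>M) = (\<integral>\<^sup>+u. ennreal (indicator {0..} u * \<beta> * u powr (\<beta> - 1))
      * emeasure M {x\<in>space M. u < Y x} \<partial>lborel)"
    by (rule layer_cake[OF _ Y_meas Y_nonneg b]) unfold_locales
  also have "\<dots> = (\<integral>\<^sup>+u. ennreal (?f u) \<partial>lborel)"
    using b by (intro nn_integral_cong) (auto simp: emeasure_eq_measure ennreal_mult[symmetric] indicator_def)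
  also have "\<dots> = ennreal (\<integral>u. ?f u \<partial>lborel)"
    using f_nonneg by (intro nn_integral_eq_integral[OF int]) auto
  finally have "(\<integral>\<^sup>+x. ennreal (Y x powr \<beta>) \<partial>M) = ennreal (\<integral>u. ?f u \<partial>lborel)" .
  moreover have "0 \<le> (\<integral>u. ?f u \<partial>lborel)" using f_nonneg by (intro integral_nonneg_AE AE_I2)
  ultimately show ?thesis by (simp add: integral_eq_nn_integral)
qed

lemma moments_from_exponential_tails:
  fixes M :: "'a measure" and Y :: "nat \<Rightarrow> 'a \<Rightarrow> real" and \<kappa> \<beta> :: real
  assumes M: "finite_measure M" and Y_meas[measurable]: "\<And>n. Y n \<in> borel_measurable M"
    and Y_nonneg: "\<And>n. AE x in M. 0 \<le> Y n x"
    and tail_lim: "\<And>u. 0 \<le> u \<Longrightarrow> (\<lambda>n. measure M {x\<in>space M. u < Y n x}) \<longlonglongrightarrow> exp (- u)"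
    and tail_bound: "\<And>n u. 0 \<le> u \<Longrightarrow> measure M {x\<in>space M. u < Y n x} \<le> exp (- (\<kappa> * u))"
    and k: "0 < \<kappa>" and b: "0 < \<beta>"
  shows "(\<lambda>n. \<integral>x. Y n x powr \<beta> \<partial>M) \<longlonglongrightarrow> \<beta> * Gamma \<beta>"
proof -
  define f where "f n u = indicator {0..} u * \<beta> * u powr (\<beta> - 1) * measure M {x\<in>space M. u < Y n x}"
    for n u
  define g where "g u = \<beta> * (indicator {0..} u * u powr (\<beta> - 1) * exp (- (\<kappa> * u)))" for u
  have [measurable]: "(\<lambda>u. measure M {x\<in>space M. u < Y n x}) \<in> borel_measurable borel" for n
    using M by (rule borel_measurable_tail) measurable
  have [measurable]: "f n \<in> borel_measurable borel" for n
    unfolding f_def by measurable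
  have g_int: "integrable lborel g"
    unfolding g_def using gamma_kernel_integrable_integral(1)[OF k b] by (rule integrable_mult_right)
  have f_bound: "AE u in lborel. norm (f n u) \<le> g u" for n
  proof (intro AE_I2)
    fix u :: real
    show "norm (f n u) \<le> g u"
    proof (cases "0 \<le> u")
      case True
      then have "\<beta> * u powr (\<beta> - 1) * measure M {x\<in>space M. u < Y n x}
          \<le> \<beta> * u powr (\<beta> - 1) * exp (- (\<kappa> * u))"
        using tail_bound b by (intro mult_left_mono) auto
      then show ?thesis using True b by (simp add: f_def g_def abs_mult mult.assoc)
    qed (simp add: f_def g_def)
  qed
  have f_lim: "AE u in lborel. (\<lambda>n. f n u) \<longlonglongrightarrow> indicator {0..} u * \<beta> * u powr (\<beta> - 1) * exp (- u)"
    by (intro AE_I2) (auto simp: f_def indicator_def intro!: tendsto_intros tail_lim)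
  have f_int: "integrable lborel (f n)" for n
    by (rule integrable_dominated_convergence2[OF _ _ g_int f_lim f_bound]) auto
  have "(\<integral>x. Y n x powr \<beta> \<partial>M) = (\<integral>u. f n u \<partial>lborel)" for n
    using f_int[of n] unfolding f_def by (rule moment_eq_tail_integral[OF M Y_meas Y_nonneg b])
  moreover have "(\<lambda>n. \<integral>u. f n u \<partial>lborel)
      \<longlonglongrightarrow> (\<integral>u. indicator {0..} u * \<beta> * u powr (\<beta> - 1) * exp (- u) \<partial>lborel)"
    by (rule integral_dominated_convergence[OF _ _ g_int f_lim f_bound]) auto
  moreover have "(\<integral>u. indicator {0..} u * \<beta> * u powr (\<beta> - 1) * exp (- u) \<partial>lborel)
      = \<beta> * (\<integral>u. indicator {0..} u * u powr (\<beta> - 1) * exp (- (1 * u)) \<partial>lborel)"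
    by (simp add: mult_ac)
  ultimately show ?thesis using gamma_kernel_integrable_integral(2)[of 1 \<beta>] b by simp
qed

section \<open>Weak convergence from tails\<close>

lemma weak_conv_weibull_from_tails:
  fixes M :: "'a measure" and X :: "nat \<Rightarrow> 'a \<Rightarrow> real" and \<delta> :: real
  assumes "prob_space M" and [measurable]: "\<And>n. X n \<in> borel_measurable M" and d: "0 < \<delta>"
    and tail_lim: "\<And>x. 0 < x \<Longrightarrow> (\<lambda>n. measure M {w\<in>space M. x < X n w}) \<longlonglongrightarrow> exp (- (x powr \<delta>))"
  shows "weak_conv (\<lambda>n. cdf (distr M borel (X n))) (weibull_cdf \<delta>)"
proof -
  interpret prob_space M by fact
  define T where "T n x = measure M {w\<in>space M. x < X n w}" for n x
  have cdf_eq: "cdf (distr M borel (X n)) x = 1 - T n x" for n x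
  proof -
    have "cdf (distr M borel (X n)) x = prob (X n -` {..x} \<inter> space M)"
      by (simp add: cdf_def measure_distr)
    also have "X n -` {..x} \<inter> space M = space M - {w\<in>space M. x < X n w}" by auto
    finally show ?thesis by (simp add: T_def prob_compl)
  qed
  have "(\<lambda>n. 1 - T n x) \<longlonglongrightarrow> weibull_cdf \<delta> x" for x
  proof (cases "0 < x")
    case True
    then show ?thesis using tail_lim[of x] by (auto simp: T_def weibull_cdf_def intro!: tendsto_intros)
  next
    case False
    then have limit: "weibull_cdf \<delta> x = 0" by (simp add: weibull_cdf_def)
    show ?thesis unfolding limit
    proof (rule order_tendstoI)
      fix u :: real assume "u < 0"
      show "eventually (\<lambda>n. u < 1 - T n x) sequentially"
      proof (intro always_eventually allI)
        fix n
        have "T n x \<le> 1" by (simp add: T_def)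
        then show "u < 1 - T n x" using \<open>u < 0\<close> by linarith
      qed
    next
      fix u :: real assume u: "0 < u"
      define z where "z = (u / 2) powr (1 / \<delta>)"
      have z: "0 < z" "z powr \<delta> = u / 2" using u d by (simp_all add: z_def powr_powr)
      have "(\<lambda>n. 1 - T n z) \<longlonglongrightarrow> 1 - exp (- (z powr \<delta>))"
        using tail_lim[OF z(1)] by (auto simp: T_def intro!: tendsto_intros)
      moreover have "1 - exp (- (z powr \<delta>)) < u"
        using one_minus_le_exp_neg[of "z powr \<delta>"] u unfolding z(2) by simp
      ultimately have "eventually (\<lambda>n. 1 - T n z < u) sequentially" by (rule order_tendstoD(2))
      then show "eventually (\<lambda>n. 1 - T n x < u) sequentially"
      proof (rule eventually_mono)
        fix n assume "1 - T n z < u"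
        moreover have "T n z \<le> T n x"
          using False z(1) unfolding T_def by (intro finite_measure_mono) auto
        ultimately show "1 - T n x < u" by linarith
      qed
    qed
  qed
  then show ?thesis by (simp add: weak_conv_def cdf_eq)
qed

text \<open>The hypotheses of the theorem (except the unused nonnegativity of a n): as n is the
  normalising sequence a n, \<omega> (n+1) the Bernoulli variable deciding whether a cut happens and
  V (n+1) the cut factor; cond1 and cond0 state their joint conditional law given F n.\<close>
locale weibull_recursion =
  fixes M :: "'w measure" and F :: "nat \<Rightarrow> 'w measure"
    and as l \<omega> V :: "nat \<Rightarrow> 'w \<Rightarrow> real"
    and \<delta> c a :: real
  assumes prob_space_M: "prob_space M"
    and \<delta>_pos: "\<delta> > 0" and c_pos: "c > 0" and a_pos: "a > 0"
    and subalg: "\<And>n. subalgebra M (F n)"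
    and filt: "filtration (space M) F"
    and meas_as: "\<And>n. as n \<in> borel_measurable (F n)"
    and meas_l: "\<And>n. l n \<in> borel_measurable (F n)"
    and meas_\<omega>: "\<And>n. \<omega> (Suc n) \<in> borel_measurable (F (Suc n))"
    and meas_V: "\<And>n. V (Suc n) \<in> borel_measurable (F (Suc n))"
    and as_bdd: "\<exists>B. \<forall>n. \<forall>x\<in>space M. as n x \<le> B"
    and as_lim: "AE x in M. decseq (\<lambda>n. as n x) \<and> (\<lambda>n. as n x) \<longlonglongrightarrow> a"
    and l0: "\<And>x. x \<in> space M \<Longrightarrow> l 0 x = 1"
    and p_range: "\<And>n x. x \<in> space M \<Longrightarrow>
                    c * l n x powr \<delta> / as n x \<in> {0..1}"
    and cond1: "\<And>n A y. A \<in> sets (F n) \<Longrightarrow> y \<in> {0..1} \<Longrightarrow>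
        measure M (A \<inter> {x \<in> space M. \<omega> (Suc n) x = 1 \<and> V (Suc n) x \<le> y})
          = (\<integral>x. indicator A x * (c * l n x powr \<delta> / as n x) \<partial>M) * y powr \<delta>"
    and cond0: "\<And>n A y. A \<in> sets (F n) \<Longrightarrow> y \<in> {0..1} \<Longrightarrow>
        measure M (A \<inter> {x \<in> space M. \<omega> (Suc n) x = 0 \<and> V (Suc n) x \<le> y})
          = (\<integral>x. indicator A x * (1 - c * l n x powr \<delta> / as n x) \<partial>M) * y powr \<delta>"
    and rec1: "\<And>n x. x \<in> space M \<Longrightarrow> \<omega> (Suc n) x = 1 \<Longrightarrow>
                 l (Suc n) x = l n x * V (Suc n) x"
    and rec0: "\<And>n x. x \<in> space M \<Longrightarrow> \<omega> (Suc n) x = 0 \<Longrightarrow>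
                 l (Suc n) x = l n x"
begin

sublocale prob_space M by (rule prob_space_M)

definition jump_prob :: "nat \<Rightarrow> 'w \<Rightarrow> real" where
  "jump_prob n x = c * l n x powr \<delta> / as n x"

lemma sets_F: "sets (F n) \<subseteq> sets M" and space_F: "space (F n) = space M"
  using subalg[of n] by (auto simp: subalgebra_def)

lemma space_in_F: "space M \<in> sets (F n)"
  using sets.top[of "F n"] space_F[of n] by simp

lemma sets_F_mono: "k \<le> n \<Longrightarrow> sets (F k) \<subseteq> sets (F n)"
  using filt by (auto simp: filtration_def)

lemma measurable_F_mono: "k \<le> n \<Longrightarrow> f \<in> borel_measurable (F k) \<Longrightarrow> f \<in> borel_measurable (F n)"
  using sets_F_mono[of k n] space_F[of k] space_F[of n] by (auto simp: measurable_def)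

lemma measurable_F_M: "f \<in> borel_measurable (F n) \<Longrightarrow> f \<in> borel_measurable M"
  using measurable_from_subalg[OF subalg] by blast

lemma jump_prob_measurable_F [measurable]: "jump_prob n \<in> borel_measurable (F n)"
  unfolding jump_prob_def[abs_def] using meas_as[of n] meas_l[of n] by measurable

lemma measurable_M [measurable]:
  "as n \<in> borel_measurable M" "l n \<in> borel_measurable M" "jump_prob n \<in> borel_measurable M"
  "\<omega> (Suc n) \<in> borel_measurable M" "V (Suc n) \<in> borel_measurable M"
  using measurable_F_M meas_as meas_l meas_\<omega> meas_V jump_prob_measurable_F by blast+

lemma jump_prob_01: "x \<in> space M \<Longrightarrow> 0 \<le> jump_prob n x \<and> jump_prob n x \<le> 1"
  using p_range[of x n] by (simp add: jump_prob_def)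

lemma integrable_mult_jump_prob:
  "f \<in> borel_measurable M \<Longrightarrow> (\<And>x. x \<in> space M \<Longrightarrow> \<bar>f x\<bar> \<le> 1)
    \<Longrightarrow> integrable M (\<lambda>x. f x * jump_prob n x)"
  using jump_prob_01
  by (intro integrable_const_bound[where B=1]) (auto simp: abs_mult intro!: mult_le_one)

lemma AE_jump_values:
  "AE x in M. (\<omega> (Suc n) x = 0 \<or> \<omega> (Suc n) x = 1) \<and> 0 < V (Suc n) x \<and> V (Suc n) x \<le> 1"
proof -
  define S where "S k y = {x\<in>space M. \<omega> (Suc n) x = k \<and> V (Suc n) x \<le> y}" for k y :: real
  have [measurable]: "S k y \<in> sets M" for k y unfolding S_def by measurable
  have int_p: "(\<integral>x. indicator (space M) x * f x \<partial>M) = (\<integral>x. f x \<partial>M)" for f :: "'w \<Rightarrow> real"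
    by (intro Bochner_Integration.integral_cong) auto
  have "prob (S 1 1) = (\<integral>x. jump_prob n x \<partial>M)"
    using cond1[OF space_in_F, of 1] int_p[of "jump_prob n"]
    by (simp add: S_def jump_prob_def Int_absorb1)
  moreover have "prob (S 0 1) = (\<integral>x. 1 - jump_prob n x \<partial>M)"
    using cond0[OF space_in_F, of 1] int_p[of "\<lambda>x. 1 - jump_prob n x"]
    by (simp add: S_def jump_prob_def Int_absorb1)
  moreover have "(\<integral>x. 1 - jump_prob n x \<partial>M) = 1 - (\<integral>x. jump_prob n x \<partial>M)"
    using integrable_mult_jump_prob[of "\<lambda>_. 1" n] by (simp add: prob_space)
  moreover have "prob (S 1 0) = 0" "prob (S 0 0) = 0"
    using cond1[OF space_in_F, of 0] cond0[OF space_in_F, of 0] \<delta>_pos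
    by (simp_all add: S_def Int_absorb1)
  moreover have "prob (S 1 1 \<union> S 0 1) = prob (S 1 1) + prob (S 0 1)"
    by (rule finite_measure_Union) (auto simp: S_def)
  moreover have "prob (S 1 0 \<union> S 0 0) \<le> prob (S 1 0) + prob (S 0 0)"
    by (rule measure_subadditive) auto
  ultimately have full: "prob (S 1 1 \<union> S 0 1) = 1" and null: "prob (S 1 0 \<union> S 0 0) = 0"
    using measure_nonneg[of M "S 1 0 \<union> S 0 0"] by linarith+
  have "AE x in M. x \<in> S 1 1 \<union> S 0 1" using full by (rule AE_prob_1)
  moreover have "AE x in M. x \<notin> S 1 0 \<union> S 0 0"
    using null by (intro AE_not_in) (simp add: null_sets_def emeasure_eq_measure)
  ultimately show ?thesis by eventually_elim (auto simp: S_def)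
qed

lemma AE_l_nonneg: "AE x in M. \<forall>n. 0 \<le> l n x"
proof -
  have "AE x in M. 0 \<le> l n x" for n
  proof (induction n)
    case 0 then show ?case using l0 by (auto intro!: AE_I2)
  next
    case (Suc n)
    from Suc AE_jump_values[of n] AE_space show ?case
      by eventually_elim (use rec0 rec1 in auto)
  qed
  then show ?thesis by (simp add: AE_all_countable)
qed

lemma AE_as_ge: "AE x in M. \<forall>n. a \<le> as n x"
  using as_lim by eventually_elim (auto intro: decseq_ge)

section \<open>The conditional law of a cut\<close>

text \<open>The expected jump probability on an event A, i.e. P(A, cut at step n + 1), and the
  event that a cut happens at step n + 1.\<close>
definition jump_mass :: "nat \<Rightarrow> 'w set \<Rightarrow> real" where
  "jump_mass n A = (\<integral>x. indicator A x * jump_prob n x \<partial>M)"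

definition jump_event :: "nat \<Rightarrow> 'w set" where
  "jump_event n = {x\<in>space M. \<omega> (Suc n) x = 1}"

lemma jump_event_sets [measurable]: "jump_event n \<in> sets M"
  unfolding jump_event_def by measurable

lemma jump_mass_nonneg: "0 \<le> jump_mass n A"
  unfolding jump_mass_def using jump_prob_01
  by (intro integral_nonneg_AE AE_I2) (auto simp: indicator_def)

lemma jump_cdf:
  "A \<in> sets (F n) \<Longrightarrow> y \<in> {0..1} \<Longrightarrow>
    prob {x\<in>space M. x \<in> A \<and> \<omega> (Suc n) x = 1 \<and> V (Suc n) x \<le> y} = jump_mass n A * y powr \<delta>"
  using cond1[of A n y]
  by (simp add: jump_mass_def jump_prob_def Int_def conj_commute conj_left_commute)

text \<open>The same for the tail events {t < V (n+1)}, using that V (n+1) \<in> (0, 1] a.s.\<close>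
lemma jump_tail:
  assumes A: "A \<in> sets (F n)"
  shows "prob {x\<in>space M. x \<in> A \<and> \<omega> (Suc n) x = 1 \<and> t < V (Suc n) x} = jump_mass n A * power_tail \<delta> t"
proof -
  have [measurable]: "A \<in> sets M" using A sets_F by blast
  let ?T = "{x\<in>space M. x \<in> A \<and> \<omega> (Suc n) x = 1 \<and> t < V (Suc n) x}"
  let ?S = "\<lambda>y. {x\<in>space M. x \<in> A \<and> \<omega> (Suc n) x = 1 \<and> V (Suc n) x \<le> y}"
  consider "t < 0" | "0 \<le> t" "t \<le> 1" | "1 < t" by linarith
  then show ?thesis
  proof cases
    case 1
    have "prob ?T = prob (?S 1)"
    proof (rule measure_eq_AE)
      show "AE x in M. x \<in> ?T \<longleftrightarrow> x \<in> ?S 1"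
        using AE_jump_values[of n] by eventually_elim (use 1 in auto)
    qed measurable
    then show ?thesis using jump_cdf[OF A, of 1] 1 by (simp add: power_tail_def)
  next
    case 2
    have "prob ?T = prob (?S 1 - ?S t)"
    proof (rule measure_eq_AE)
      show "AE x in M. x \<in> ?T \<longleftrightarrow> x \<in> ?S 1 - ?S t"
        using AE_jump_values[of n] by eventually_elim (use 2 in auto)
    qed measurable
    also have "\<dots> = prob (?S 1) - prob (?S t)"
      by (subst finite_measure_Diff) (use 2 in auto)
    finally show ?thesis
      using jump_cdf[OF A, of 1] jump_cdf[OF A, of t] 2 by (simp add: power_tail_def right_diff_distrib)
  next
    case 3
    have "prob ?T = prob {}"
    proof (rule measure_eq_AE)
      show "AE x in M. x \<in> ?T \<longleftrightarrow> x \<in> {}"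
        using AE_jump_values[of n] by eventually_elim (use 3 in auto)
    qed measurable
    then show ?thesis using 3 by (simp add: power_tail_def)
  qed
qed

lemma jump_law:
  assumes A: "A \<in> sets (F n)" and B: "B \<in> sets borel"
  shows "emeasure M {x\<in>space M. x \<in> A \<and> \<omega> (Suc n) x = 1 \<and> V (Suc n) x \<in> B}
          = ennreal (jump_mass n A) * emeasure (power_law \<delta>) B"
proof -
  have [measurable]: "A \<in> sets M" using A sets_F by blast
  have A_space: "A \<subseteq> space M" using sets.sets_into_space[OF A] space_F[of n] by simp
  define D1 where "D1 = distr (density M (indicator (jump_event n \<inter> A))) borel (V (Suc n))"
  define D2 where "D2 = density (power_law \<delta>) (\<lambda>_. ennreal (jump_mass n A))"
  have D1: "emeasure D1 X = emeasure M {x\<in>space M. x \<in> A \<and> \<omega> (Suc n) x = 1 \<and> V (Suc n) x \<in> X}"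
    if X: "X \<in> sets borel" for X
  proof -
    have "emeasure D1 X = emeasure (density M (indicator (jump_event n \<inter> A))) (V (Suc n) -` X \<inter> space M)"
      unfolding D1_def using X by (subst emeasure_distr) simp_all
    also have "\<dots> = emeasure M ((jump_event n \<inter> A) \<inter> (V (Suc n) -` X \<inter> space M))"
      using X by (intro emeasure_restricted) simp_all
    also have "(jump_event n \<inter> A) \<inter> (V (Suc n) -` X \<inter> space M)
        = {x\<in>space M. x \<in> A \<and> \<omega> (Suc n) x = 1 \<and> V (Suc n) x \<in> X}"
      using A_space by (auto simp: jump_event_def)
    finally show ?thesis .
  qed
  have D2: "emeasure D2 X = ennreal (jump_mass n A) * emeasure (power_law \<delta>) X"
    if "X \<in> sets borel" for X
    unfolding D2_def using that by (subst emeasure_density) (simp_all add: nn_integral_cmult_indicator)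
  have "D1 = D2"
  proof (rule measure_eqI_lessThan)
    show "sets D1 = sets borel" "sets D2 = sets borel" by (auto simp: D1_def D2_def)
    fix t :: real
    have "emeasure D1 {t<..} \<le> 1" by (subst D1) (simp_all add: emeasure_le_1 del: greaterThan_iff)
    then show "emeasure D1 {t<..} < \<infinity>" using ennreal_one_less_top le_less_trans by fastforce
    have "emeasure D1 {t<..}
        = ennreal (prob {x\<in>space M. x \<in> A \<and> \<omega> (Suc n) x = 1 \<and> t < V (Suc n) x})"
      by (subst D1) (simp_all add: emeasure_eq_measure)
    also have "\<dots> = ennreal (jump_mass n A) * ennreal (power_tail \<delta> t)"
      using jump_tail[OF A, of t] jump_mass_nonneg power_tail_nonneg[OF \<delta>_pos] by (simp add: ennreal_mult)
    also have "\<dots> = emeasure D2 {t<..}"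
      by (subst D2) (auto simp: emeasure_power_law_greaterThan[OF \<delta>_pos])
    finally show "emeasure D1 {t<..} = emeasure D2 {t<..}" .
  qed
  then show ?thesis using D1[OF B] D2[OF B] by simp
qed

definition jump_weighted :: "nat \<Rightarrow> 'w measure" where
  "jump_weighted n = density (restr_to_subalg M (F n)) (\<lambda>x. ennreal (jump_prob n x))"

definition jump_pair :: "nat \<Rightarrow> ('w \<times> real) measure" where
  "jump_pair n = distr (density M (indicator (jump_event n))) (F n \<Otimes>\<^sub>M borel) (\<lambda>x. (x, V (Suc n) x))"

lemma sets_jump_weighted [simp]: "sets (jump_weighted n) = sets (F n)"
  by (simp add: jump_weighted_def sets_restr_to_subalg[OF subalg])

lemma space_jump_weighted [simp]: "space (jump_weighted n) = space M"
  by (simp add: jump_weighted_def space_restr_to_subalg)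

lemma measurable_state_factor:
  "(\<lambda>x. (x, V (Suc n) x)) \<in> measurable (density M (indicator (jump_event n))) (F n \<Otimes>\<^sub>M borel)"
proof (rule measurable_Pair)
  have "(\<lambda>x. x) \<in> measurable M (F n)"
    using sets_F[of n] space_F[of n] sets.sets_into_space[of _ "F n"]
    by (auto simp: measurable_def Int_absorb2)
  then show "(\<lambda>x. x) \<in> measurable (density M (indicator (jump_event n))) (F n)"
    unfolding measurable_def by simp
qed simp

lemma nn_integral_jump_weighted:
  assumes f[measurable]: "f \<in> borel_measurable (F n)"
    and f01: "\<And>x. x \<in> space M \<Longrightarrow> 0 \<le> f x \<and> f x \<le> 1"
  shows "(\<integral>\<^sup>+x. ennreal (f x) \<partial>jump_weighted n) = ennreal (\<integral>x. f x * jump_prob n x \<partial>M)"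
proof -
  have [measurable]: "(\<lambda>x. ennreal (jump_prob n x)) \<in> borel_measurable (restr_to_subalg M (F n))"
    "(\<lambda>x. ennreal (f x)) \<in> borel_measurable (restr_to_subalg M (F n))"
    by (intro measurable_in_subalg[OF subalg]; measurable)+
  have "(\<integral>\<^sup>+x. ennreal (f x) \<partial>jump_weighted n)
      = (\<integral>\<^sup>+x. ennreal (jump_prob n x) * ennreal (f x) \<partial>restr_to_subalg M (F n))"
    unfolding jump_weighted_def by (rule nn_integral_density) measurable
  also have "\<dots> = (\<integral>\<^sup>+x. ennreal (f x * jump_prob n x) \<partial>restr_to_subalg M (F n))"
    by (intro nn_integral_cong)
       (auto simp: space_restr_to_subalg ennreal_mult[symmetric] f01 jump_prob_01 mult.commute)
  also have "\<dots> = (\<integral>\<^sup>+x. ennreal (f x * jump_prob n x) \<partial>M)"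
    by (rule nn_integral_subalgebra2[OF subalg]) measurable
  also have "\<dots> = ennreal (\<integral>x. f x * jump_prob n x \<partial>M)"
  proof (rule nn_integral_eq_integral)
    show "integrable M (\<lambda>x. f x * jump_prob n x)"
      using f01 measurable_F_M[OF f] by (intro integrable_mult_jump_prob) auto
    show "AE x in M. 0 \<le> f x * jump_prob n x" using f01 jump_prob_01 by (intro AE_I2) auto
  qed
  finally show ?thesis .
qed

lemma emeasure_jump_weighted:
  assumes A: "A \<in> sets (F n)"
  shows "emeasure (jump_weighted n) A = ennreal (jump_mass n A)"
proof -
  have "emeasure (jump_weighted n) A = (\<integral>\<^sup>+x. ennreal (indicator A x) \<partial>jump_weighted n)"
    using A by (subst ennreal_indicator, subst nn_integral_indicator) auto
  also have "\<dots> = ennreal (jump_mass n A)"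
    unfolding jump_mass_def by (rule nn_integral_jump_weighted) (use A in auto)
  finally show ?thesis .
qed

text \<open>Product structure: on a jump, the factor is independent of F n with law power_law \<delta>
  (jump_law on rectangles A \<times> B).\<close>
lemma jump_pair_eq: "jump_pair n = jump_weighted n \<Otimes>\<^sub>M power_law \<delta>"
proof (rule pair_measure_eqI[symmetric])
  have "emeasure (jump_weighted n) (space (jump_weighted n)) = ennreal (jump_mass n (space M))"
    using emeasure_jump_weighted[OF space_in_F] by simp
  then show "sigma_finite_measure (jump_weighted n)"
    by (intro finite_measure.sigma_finite_measure finite_measureI) auto
  show "sigma_finite_measure (power_law \<delta>)"
    using prob_space_power_law by (simp add: prob_space_def finite_measure_def)
  show "sets (jump_weighted n \<Otimes>\<^sub>M power_law \<delta>) = sets (jump_pair n)"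
    by (simp add: jump_pair_def cong: sets_pair_measure_cong)
  fix A B assume "A \<in> sets (jump_weighted n)" and "B \<in> sets (power_law \<delta>)"
  then have A: "A \<in> sets (F n)" and B: "B \<in> sets borel" by auto
  have "emeasure (jump_weighted n) A = ennreal (jump_mass n A)"
    by (rule emeasure_jump_weighted[OF A])
  moreover have "emeasure (jump_pair n) (A \<times> B)
      = emeasure M (jump_event n \<inter> ((\<lambda>x. (x, V (Suc n) x)) -` (A \<times> B) \<inter> space M))"
    unfolding jump_pair_def using A B sets_F[of n]
    by (subst emeasure_distr[OF measurable_state_factor]) (auto intro!: emeasure_restricted)
  moreover have "jump_event n \<inter> ((\<lambda>x. (x, V (Suc n) x)) -` (A \<times> B) \<inter> space M)
      = {x\<in>space M. x \<in> A \<and> \<omega> (Suc n) x = 1 \<and> V (Suc n) x \<in> B}"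
    by (auto simp: jump_event_def)
  ultimately show "emeasure (jump_weighted n) A * emeasure (power_law \<delta>) B = emeasure (jump_pair n) (A \<times> B)"
    using jump_law[OF A B] by simp
qed

lemma integrable_indicator_mult_bounded:
  fixes f :: "'w \<Rightarrow> real"
  assumes [measurable]: "A \<in> sets M" "f \<in> borel_measurable M" and bound: "\<And>x. x \<in> A \<Longrightarrow> \<bar>f x\<bar> \<le> 1"
  shows "integrable M (\<lambda>x. indicator A x * f x)"
proof -
  have "AE x in M. norm (indicator A x * f x) \<le> 1"
    using bound by (intro AE_I2) (auto simp: indicator_def)
  then show ?thesis by (rule integrable_const_bound) measurable
qed

lemma prob_jump_above:
  assumes B[measurable]: "B \<in> sets (F n)" and y: "0 \<le> y" and above: "\<And>x. x \<in> B \<Longrightarrow> y < l n x"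
  shows "prob {x\<in>space M. x \<in> B \<and> \<omega> (Suc n) x = 1 \<and> y < l n x * V (Suc n) x}
       = (\<integral>x. indicator B x * (1 - (y / l n x) powr \<delta>) * jump_prob n x \<partial>M)"
proof -
  note [measurable] = meas_l[of n]
  define S where "S = {z \<in> space (F n \<Otimes>\<^sub>M borel). fst z \<in> B \<and> y < l n (fst z) * snd z}"
  have S[measurable]: "S \<in> sets (F n \<Otimes>\<^sub>M borel)" unfolding S_def by measurable
  define f where "f x = indicator B x * (1 - (y / l n x) powr \<delta>)" for x
  have [measurable]: "f \<in> borel_measurable (F n)" unfolding f_def[abs_def] by measurable
  have f01: "0 \<le> f x \<and> f x \<le> 1" for x
  proof (cases "x \<in> B")
    case True
    then have "0 \<le> y / l n x" "y / l n x \<le> 1" using above[of x] y by auto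
    then have "(y / l n x) powr \<delta> \<le> 1" using \<delta>_pos by (intro powr_le1) auto
    then show ?thesis using True by (simp add: f_def)
  qed (simp add: f_def)
  have "emeasure (jump_pair n) S = emeasure M (jump_event n \<inter> ((\<lambda>x. (x, V (Suc n) x)) -` S \<inter> space M))"
    unfolding jump_pair_def using measurable_sets[OF measurable_state_factor S]
    by (subst emeasure_distr[OF measurable_state_factor]) (auto intro!: emeasure_restricted)
  also have "jump_event n \<inter> ((\<lambda>x. (x, V (Suc n) x)) -` S \<inter> space M)
      = {x\<in>space M. x \<in> B \<and> \<omega> (Suc n) x = 1 \<and> y < l n x * V (Suc n) x}"
    by (auto simp: jump_event_def S_def space_pair_measure space_F)
  finally have "emeasure M {x\<in>space M. x \<in> B \<and> \<omega> (Suc n) x = 1 \<and> y < l n x * V (Suc n) x}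
      = emeasure (jump_weighted n \<Otimes>\<^sub>M power_law \<delta>) S"
    by (simp add: jump_pair_eq)
  also have "\<dots> = (\<integral>\<^sup>+x. emeasure (power_law \<delta>) (Pair x -` S) \<partial>jump_weighted n)"
    using prob_space_power_law
    by (intro sigma_finite_measure.emeasure_pair_measure_alt)
       (auto simp: prob_space_def finite_measure_def cong: sets_pair_measure_cong)
  also have "\<dots> = (\<integral>\<^sup>+x. ennreal (f x) \<partial>jump_weighted n)"
  proof (intro nn_integral_cong)
    fix x assume x: "x \<in> space (jump_weighted n)"
    show "emeasure (power_law \<delta>) (Pair x -` S) = ennreal (f x)"
    proof (cases "x \<in> B")
      case True
      have l_pos: "0 < l n x" using above[OF True] y by auto
      then have "Pair x -` S = {y / l n x <..}"
        using x True by (auto simp: S_def space_pair_measure space_F field_simps)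
      moreover have "0 \<le> y / l n x" "y / l n x \<le> 1" using above[OF True] y l_pos by auto
      ultimately show ?thesis
        using True by (simp add: emeasure_power_law_greaterThan[OF \<delta>_pos] power_tail_def f_def)
    next
      case False
      then have "Pair x -` S = {}" by (auto simp: S_def)
      then show ?thesis using False by (simp add: f_def)
    qed
  qed
  also have "\<dots> = ennreal (\<integral>x. f x * jump_prob n x \<partial>M)"
    by (rule nn_integral_jump_weighted) (use f01 in auto)
  finally show ?thesis
    using f01 jump_prob_01 by (simp add: emeasure_eq_measure f_def integral_nonneg_AE)
qed

lemma prob_stay:
  assumes B: "B \<in> sets (F n)"
  shows "prob {x\<in>space M. x \<in> B \<and> \<omega> (Suc n) x = 0} = (\<integral>x. indicator B x * (1 - jump_prob n x) \<partial>M)"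
proof -
  have [measurable]: "B \<in> sets M" using B sets_F by blast
  have "prob {x\<in>space M. x \<in> B \<and> \<omega> (Suc n) x = 0}
      = prob (B \<inter> {x \<in> space M. \<omega> (Suc n) x = 0 \<and> V (Suc n) x \<le> 1})"
  proof (rule measure_eq_AE)
    show "AE x in M. x \<in> {x\<in>space M. x \<in> B \<and> \<omega> (Suc n) x = 0}
        \<longleftrightarrow> x \<in> B \<inter> {x \<in> space M. \<omega> (Suc n) x = 0 \<and> V (Suc n) x \<le> 1}"
      using AE_jump_values[of n] by eventually_elim auto
  qed measurable
  also have "\<dots> = (\<integral>x. indicator B x * (1 - jump_prob n x) \<partial>M)"
    using cond0[OF B, of 1] by (simp add: jump_prob_def)
  finally show ?thesis .
qed

text \<open>A length is above y after the step iff it was above y before, and either no cut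
  happened or the cut kept it above y (cuts only shorten, as V \<le> 1).\<close>
lemma AE_next_above:
  assumes y: "0 \<le> y"
  shows "AE x in M. y < l (Suc n) x \<longleftrightarrow> y < l n x \<and>
    (\<omega> (Suc n) x = 0 \<or> (\<omega> (Suc n) x = 1 \<and> y < l n x * V (Suc n) x))"
  using AE_jump_values[of n] AE_space
proof eventually_elim
  case (elim x)
  then have x: "x \<in> space M" and V: "0 < V (Suc n) x" "V (Suc n) x \<le> 1" by auto
  have "l n x * V (Suc n) x \<le> max 0 (l n x)"
    using V by (cases "0 \<le> l n x") (auto simp: mult_left_le mult_nonpos_nonneg)
  then have "y < l n x * V (Suc n) x \<Longrightarrow> y < l n x" using y by linarith
  then show ?case using elim rec0[OF x] rec1[OF x] by auto
qed

text \<open>The cancellation behind the one-step identity: the jump probability times the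
  power-law survival probability (y / l n)^\<delta> of a jump does not depend on l n.\<close>
lemma jump_prob_cancel:
  "0 < l n x \<Longrightarrow> 0 \<le> y \<Longrightarrow> jump_prob n x * (y / l n x) powr \<delta> = c * y powr \<delta> / as n x"
  by (simp add: jump_prob_def powr_divide field_simps)

text \<open>The jump probability c l n^\<delta> / a n and the survival probability (y / l n)^\<delta> of a jump
  combine so that l n cancels.\<close>
lemma tail_step:
  assumes B[measurable]: "B \<in> sets (F n)" and y: "0 \<le> y"
  shows "prob {x\<in>space M. x \<in> B \<and> y < l (Suc n) x}
       = (\<integral>x. indicator (B \<inter> {x\<in>space M. y < l n x}) x * (1 - c * y powr \<delta> / as n x) \<partial>M)"
proof -
  note [measurable] = meas_l[of n] meas_as[of n]
  define B' where "B' = B \<inter> {x\<in>space M. y < l n x}"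
  have "{x\<in>space (F n). y < l n x} \<in> sets (F n)" by measurable
  then have B'F[measurable]: "B' \<in> sets (F n)"
    unfolding B'_def using sets.Int[OF B] space_F[of n] by simp
  have [measurable]: "B \<in> sets M" "B' \<in> sets M" using B B'F sets_F by blast+
  have B'_above: "\<And>x. x \<in> B' \<Longrightarrow> y < l n x" by (auto simp: B'_def)
  define S0 where "S0 = {x\<in>space M. x \<in> B' \<and> \<omega> (Suc n) x = 0}"
  define S1 where "S1 = {x\<in>space M. x \<in> B' \<and> \<omega> (Suc n) x = 1 \<and> y < l n x * V (Suc n) x}"
  have [measurable]: "S0 \<in> sets M" "S1 \<in> sets M" unfolding S0_def S1_def by measurable
  have "prob {x\<in>space M. x \<in> B \<and> y < l (Suc n) x} = prob (S0 \<union> S1)"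
  proof (rule measure_eq_AE)
    show "AE x in M. x \<in> {x\<in>space M. x \<in> B \<and> y < l (Suc n) x} \<longleftrightarrow> x \<in> S0 \<union> S1"
      using AE_next_above[OF y, of n] AE_space
      by eventually_elim (auto simp: S0_def S1_def B'_def)
  qed measurable
  also have "\<dots> = prob S0 + prob S1"
    by (rule finite_measure_Union) (auto simp: S0_def S1_def)
  also have "\<dots> = (\<integral>x. indicator B' x * (1 - jump_prob n x)
      + indicator B' x * (1 - (y / l n x) powr \<delta>) * jump_prob n x \<partial>M)"
  proof -
    have "integrable M (\<lambda>x. indicator B' x * ((1 - (y / l n x) powr \<delta>) * jump_prob n x))"
    proof (rule integrable_indicator_mult_bounded)
      fix x assume "x \<in> B'"
      then have "0 \<le> y / l n x" "y / l n x \<le> 1" using B'_above[of x] y by auto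
      then have "(y / l n x) powr \<delta> \<le> 1" using \<delta>_pos by (intro powr_le1) auto
      then show "\<bar>(1 - (y / l n x) powr \<delta>) * jump_prob n x\<bar> \<le> 1"
        using jump_prob_01[of x n] \<open>x \<in> B'\<close> sets.sets_into_space[OF \<open>B' \<in> sets M\<close>]
        by (auto simp: abs_mult intro!: mult_le_one)
    qed measurable
    moreover have "integrable M (\<lambda>x. indicator B' x * (1 - jump_prob n x))"
      using jump_prob_01 sets.sets_into_space[OF \<open>B' \<in> sets M\<close>]
      by (intro integrable_indicator_mult_bounded) (measurable, fastforce)
    ultimately show ?thesis
      using prob_stay[OF B'F] prob_jump_above[OF B'F y B'_above]
      by (simp add: S0_def S1_def Bochner_Integration.integral_add mult.assoc)
  qed
  also have "\<dots> = (\<integral>x. indicator B' x * (1 - c * y powr \<delta> / as n x) \<partial>M)"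
  proof (intro Bochner_Integration.integral_cong refl)
    fix x assume "x \<in> space M"
    show "indicator B' x * (1 - jump_prob n x) + indicator B' x * (1 - (y / l n x) powr \<delta>) * jump_prob n x
        = indicator B' x * (1 - c * y powr \<delta> / as n x)"
    proof (cases "x \<in> B'")
      case True
      have "0 < l n x" using B'_above[OF True] y by auto
      then show ?thesis using True jump_prob_cancel[of n x y] y by (simp add: algebra_simps)
    qed simp
  qed
  finally show ?thesis unfolding B'_def .
qed

section \<open>Tail estimates\<close>

definition tail_on :: "nat \<Rightarrow> real \<Rightarrow> 'w set \<Rightarrow> real" where
  "tail_on n y B = prob {x\<in>space M. x \<in> B \<and> y < l n x}"

lemma tail_on_le_1: "tail_on n y B \<le> 1"
  by (simp add: tail_on_def)

lemma tail_on_mono: "B \<subseteq> B' \<Longrightarrow> B' \<in> sets (F n) \<Longrightarrow> tail_on n y B \<le> tail_on n y B'"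
  unfolding tail_on_def using sets_F[of n] by (intro finite_measure_mono) auto

lemma tail_step_integral:
  assumes B: "B \<in> sets (F n)" and y: "0 \<le> y"
  defines "S \<equiv> {x\<in>space M. x \<in> B \<and> y < l n x}"
  shows "tail_on (Suc n) y B = (\<integral>x. indicator S x * (1 - c * y powr \<delta> / as n x) \<partial>M)"
    and "S \<in> sets M"
    and "integrable M (\<lambda>x. indicator S x * (1 - c * y powr \<delta> / as n x))"
    and "\<And>u::real. integrable M (\<lambda>x. indicator S x * u)"
    and "\<And>u::real. (\<integral>x. indicator S x * u \<partial>M) = u * tail_on n y B"
proof -
  have [measurable]: "B \<in> sets M" using B sets_F by blast
  have "B \<inter> {x\<in>space M. y < l n x} = S" by (auto simp: S_def)
  then show "tail_on (Suc n) y B = (\<integral>x. indicator S x * (1 - c * y powr \<delta> / as n x) \<partial>M)"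
    using tail_step[OF B y] by (simp add: tail_on_def)
  show S[measurable]: "S \<in> sets M" unfolding S_def by measurable
  show "integrable M (\<lambda>x. indicator S x * u)" for u :: real
    by (rule integrable_const_bound[where B="\<bar>u\<bar>"]) (auto simp: indicator_def)
  show "(\<integral>x. indicator S x * u \<partial>M) = u * tail_on n y B" for u :: real
  proof -
    have "prob (S \<inter> space M) = tail_on n y B"
      by (auto simp: tail_on_def S_def intro!: arg_cong[where f=prob])
    then show ?thesis by (simp add: integral_mult_left_zero)
  qed
  show "integrable M (\<lambda>x. indicator S x * (1 - c * y powr \<delta> / as n x))"
  proof (rule integrable_const_bound[where B="1 + c * y powr \<delta> / a"])
    show "AE x in M. norm (indicator S x * (1 - c * y powr \<delta> / as n x)) \<le> 1 + c * y powr \<delta> / a"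
      using AE_as_ge
    proof eventually_elim
      case (elim x)
      then have "a \<le> as n x" by auto
      then have "c * y powr \<delta> / as n x \<le> c * y powr \<delta> / a" "0 \<le> c * y powr \<delta> / as n x"
        using a_pos c_pos by (auto intro!: divide_left_mono)
      then show ?case by (auto simp: indicator_def)
    qed
  qed measurable
qed

lemma tail_step_lower:
  assumes B: "B \<in> sets (F n)" and y: "0 \<le> y"
    and u: "AE x in M. x \<in> B \<longrightarrow> u \<le> 1 - c * y powr \<delta> / as n x"
  shows "u * tail_on n y B \<le> tail_on (Suc n) y B"
proof -
  note step = tail_step_integral[OF B y]
  have "u * tail_on n y B = (\<integral>x. indicator {x\<in>space M. x \<in> B \<and> y < l n x} x * u \<partial>M)"
    by (rule step(5)[symmetric])
  also have "\<dots> \<le> tail_on (Suc n) y B"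
    unfolding step(1) using step(3,4) u
    by (intro integral_mono_AE) (auto simp: indicator_def elim!: eventually_mono)
  finally show ?thesis .
qed

lemma tail_step_upper:
  assumes B: "B \<in> sets (F n)" and y: "0 \<le> y"
    and u: "AE x in M. x \<in> B \<longrightarrow> 1 - c * y powr \<delta> / as n x \<le> u"
  shows "tail_on (Suc n) y B \<le> u * tail_on n y B"
proof -
  note step = tail_step_integral[OF B y]
  have "tail_on (Suc n) y B \<le> (\<integral>x. indicator {x\<in>space M. x \<in> B \<and> y < l n x} x * u \<partial>M)"
    unfolding step(1) using step(3,4) u
    by (intro integral_mono_AE) (auto simp: indicator_def elim!: eventually_mono)
  also have "\<dots> = u * tail_on n y B"
    by (rule step(5))
  finally show ?thesis .
qed

lemma AE_rate_bounds:
  "AE x in M. \<forall>n. c * y powr \<delta> / as n x \<le> c * y powr \<delta> / a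
                 \<and> (\<forall>t. as n x \<le> t \<longrightarrow> c * y powr \<delta> / t \<le> c * y powr \<delta> / as n x)"
  using AE_as_ge
proof eventually_elim
  case (elim x)
  then have "0 < as n x" for n using a_pos by (auto intro: less_le_trans)
  with elim show ?case
    using a_pos c_pos by (auto intro!: divide_left_mono mult_pos_pos intro: less_le_trans)
qed

text \<open>Since a n \<ge> a, the tail decays at most geometrically with ratio 1 - c y^\<delta> / a.\<close>
lemma tail_lower:
  assumes y: "0 \<le> y" "y < 1" and rate: "c * y powr \<delta> / a \<le> 1"
  shows "(1 - c * y powr \<delta> / a) ^ n \<le> tail_on n y (space M)"
proof (induction n)
  case 0
  have "{x\<in>space M. x \<in> space M \<and> y < l 0 x} = space M" using l0 y by auto
  then show ?case by (simp add: tail_on_def prob_space)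
next
  case (Suc n)
  have "(1 - c * y powr \<delta> / a) * tail_on n y (space M) \<le> tail_on (Suc n) y (space M)"
    by (rule tail_step_lower[OF space_in_F y(1)])
       (use AE_rate_bounds[of y] in \<open>auto elim!: eventually_mono\<close>)
  moreover have "(1 - c * y powr \<delta> / a) ^ Suc n \<le> (1 - c * y powr \<delta> / a) * tail_on n y (space M)"
    using Suc rate by (simp add: mult_left_mono)
  ultimately show ?case by linarith
qed

definition as_bound :: real where
  "as_bound = max a (SOME B. \<forall>n. \<forall>x\<in>space M. as n x \<le> B)"

lemma as_le_bound: "x \<in> space M \<Longrightarrow> as n x \<le> as_bound"
  using someI_ex[OF as_bdd] by (auto simp: as_bound_def intro: le_max_iff_disj[THEN iffD2])

lemma as_bound_pos: "0 < as_bound"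
  using a_pos by (simp add: as_bound_def)

definition below :: "nat \<Rightarrow> nat \<Rightarrow> real \<Rightarrow> 'w set" where
  "below N n t = {x\<in>space M. \<forall>k\<in>{N..<n}. as k x \<le> t}"

lemma below_sets: "n \<le> Suc m \<Longrightarrow> below N n t \<in> sets (F m)"
proof -
  assume n: "n \<le> Suc m"
  have "Measurable.pred (F m) (\<lambda>x. \<forall>k\<in>{N..<n}. as k x \<le> t)"
  proof (rule pred_intros_finite)
    fix k assume "k \<in> {N..<n}"
    then have [measurable]: "as k \<in> borel_measurable (F m)"
      using n measurable_F_mono[OF _ meas_as] by auto
    show "Measurable.pred (F m) (\<lambda>x. as k x \<le> t)" by measurable
  qed simp
  then show ?thesis unfolding below_def pred_def using space_F[of m] by simp
qed

lemma tail_upper_below: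
  assumes y: "0 \<le> y" and t: "0 < t"
  shows "tail_on (N + m) y (below N (N + m) t) \<le> exp (- (c * y powr \<delta> / t) * m)"
proof (induction m)
  case 0
  then show ?case using tail_on_le_1 by simp
next
  case (Suc m)
  let ?k = "c * y powr \<delta> / t"
  have "tail_on (Suc (N + m)) y (below N (Suc (N + m)) t)
      \<le> (1 - ?k) * tail_on (N + m) y (below N (Suc (N + m)) t)"
    by (rule tail_step_upper[OF below_sets y]) 
       (use AE_rate_bounds[of y] in \<open>auto simp: below_def elim!: eventually_mono\<close>)
  also have "\<dots> \<le> exp (- ?k) * tail_on (N + m) y (below N (Suc (N + m)) t)"
    using one_minus_le_exp_neg by (intro mult_right_mono) (auto simp: tail_on_def)
  also have "\<dots> \<le> exp (- ?k) * tail_on (N + m) y (below N (N + m) t)"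
    by (intro mult_left_mono tail_on_mono below_sets) (auto simp: below_def)
  also have "\<dots> \<le> exp (- ?k) * exp (- ?k * m)"
    using Suc by (intro mult_left_mono) auto
  also have "\<dots> = exp (- ?k * Suc m)"
    by (simp add: exp_add[symmetric] algebra_simps add_divide_distrib)
  finally show ?case by simp
qed

lemma tail_upper:
  assumes y: "0 \<le> y"
  shows "tail_on n y (space M) \<le> exp (- (c * y powr \<delta> / as_bound) * n)"
proof -
  have "below 0 n as_bound = space M" by (auto simp: below_def as_le_bound)
  then show ?thesis using tail_upper_below[OF y as_bound_pos, of 0 n] by simp
qed

definition exceed :: "nat \<Rightarrow> real \<Rightarrow> 'w set" where
  "exceed N t = {x\<in>space M. \<exists>k\<ge>N. t < as k x}"

lemma exceed_sets [measurable]: "exceed N t \<in> sets M"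
  unfolding exceed_def by measurable

lemma prob_exceed_tendsto_0:
  assumes t: "a < t"
  shows "(\<lambda>N. prob (exceed N t)) \<longlonglongrightarrow> 0"
proof -
  have "(\<lambda>N. prob (exceed N t)) \<longlonglongrightarrow> prob (\<Inter>N. exceed N t)"
    by (rule finite_Lim_measure_decseq)
       (auto intro!: decseq_SucI simp: exceed_def dest: Suc_leD)
  moreover have "AE x in M. x \<notin> (\<Inter>N. exceed N t)"
    using as_lim
  proof eventually_elim
    case (elim x)
    then have "eventually (\<lambda>k. as k x < t) sequentially"
      using t by (auto intro: order_tendstoD)
    then obtain N where "\<forall>k\<ge>N. as k x < t" by (auto simp: eventually_sequentially)
    then show ?case unfolding exceed_def by (auto intro!: exI[of _ N] simp: not_less less_imp_le)
  qed
  then have "(\<Inter>N. exceed N t) \<in> null_sets M"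
    using AE_iff_null_sets[of "\<Inter>N. exceed N t" M] by auto
  then have "prob (\<Inter>N. exceed N t) = 0" by (simp add: measure_def null_sets_def)
  ultimately show ?thesis by simp
qed

lemma tail_split: "tail_on n y (space M) \<le> tail_on n y (below N n t) + prob (exceed N t)"
proof -
  have below[measurable]: "below N n t \<in> sets M" using below_sets[of n n N t] sets_F[of n] by auto
  have sub: "{x\<in>space M. x \<in> space M \<and> y < l n x}
      \<subseteq> {x\<in>space M. x \<in> below N n t \<and> y < l n x} \<union> exceed N t"
    unfolding below_def exceed_def by (auto simp: not_less)
  have "tail_on n y (space M) \<le> prob ({x\<in>space M. x \<in> below N n t \<and> y < l n x} \<union> exceed N t)"
    unfolding tail_on_def using sub by (rule finite_measure_mono) measurable
  also have "\<dots> \<le> tail_on n y (below N n t) + prob (exceed N t)"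
    unfolding tail_on_def by (rule measure_Un_le) measurable
  finally show ?thesis .
qed

section \<open>The scaled tail\<close>

definition scale :: "nat \<Rightarrow> real" where
  "scale n = (c / a * real n) powr (1 / \<delta>)"

definition scaled_tail :: "nat \<Rightarrow> real \<Rightarrow> real" where
  "scaled_tail n x = prob {w\<in>space M. x < scale n * l n w}"

lemma scale_pos: "0 < n \<Longrightarrow> 0 < scale n"
  using a_pos c_pos by (simp add: scale_def)

lemma scale_nonneg: "0 \<le> scale n"
  by (simp add: scale_def)

lemma scaled_tail_eq: "0 < n \<Longrightarrow> scaled_tail n x = tail_on n (x / scale n) (space M)"
  unfolding scaled_tail_def tail_on_def using scale_pos[of n]
  by (intro arg_cong[where f=prob]) (auto simp: field_simps)

lemma scaled_rate:
  assumes "0 < n" "0 \<le> x"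
  shows "c * (x / scale n) powr \<delta> / a = x powr \<delta> / n"
proof -
  have "scale n powr \<delta> = c / a * real n"
    using a_pos c_pos \<delta>_pos by (simp add: scale_def powr_powr)
  moreover have "(x / scale n) powr \<delta> = x powr \<delta> / scale n powr \<delta>"
    using assms scale_pos[of n] by (simp add: powr_divide)
  ultimately show ?thesis using assms a_pos c_pos by (simp add: field_simps)
qed

lemma scaled_tail_lower:
  assumes n: "0 < n" and x: "0 \<le> x" and small: "x / scale n < 1" and rate: "x powr \<delta> / n \<le> 1"
  shows "(1 - x powr \<delta> / n) ^ n \<le> scaled_tail n x"
  using tail_lower[of "x / scale n" n] scaled_rate[OF n x] scaled_tail_eq[OF n] small rate x
    scale_pos[OF n] by simp

lemma scaled_tail_bound:
  assumes x: "0 \<le> x"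
  shows "scaled_tail n x \<le> exp (- (a / as_bound * x powr \<delta>))"
proof (cases "n = 0")
  case True
  then show ?thesis using x by (simp add: scaled_tail_def scale_def)
next
  case False
  then have n: "0 < n" by simp
  have rate: "c * (x / scale n) powr \<delta> / as_bound * n = a / as_bound * x powr \<delta>"
    using scaled_rate[OF n x] n a_pos as_bound_pos by (simp add: field_simps)
  have "scaled_tail n x \<le> exp (- (c * (x / scale n) powr \<delta> / as_bound) * n)"
    using tail_upper[of "x / scale n" n] scaled_tail_eq[OF n] x scale_pos[OF n] by simp
  also have "\<dots> = exp (- (a / as_bound * x powr \<delta>))"
    by (simp only: mult_minus_left rate)
  finally show ?thesis .
qed

lemma scaled_tail_upper:
  assumes n: "N < n" and x: "0 \<le> x" and e: "0 < e"
  shows "scaled_tail n x \<le> exp (- (x powr \<delta> / (1 + e)) * ((real n - N) / n)) + prob (exceed N (a * (1 + e)))"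
proof -
  obtain m where nm: "n = N + m" using n less_imp_add_positive by blast
  have n0: "0 < n" using n by simp
  have "c * (x / scale n) powr \<delta> / (a * (1 + e)) = (c * (x / scale n) powr \<delta> / a) / (1 + e)"
    by simp
  also have "\<dots> = x powr \<delta> / (1 + e) / n" using scaled_rate[OF n0 x] by simp
  finally have rate: "c * (x / scale n) powr \<delta> / (a * (1 + e)) = x powr \<delta> / (1 + e) / n" .
  have "tail_on n (x / scale n) (below N n (a * (1 + e)))
      \<le> exp (- (c * (x / scale n) powr \<delta> / (a * (1 + e))) * m)"
    using tail_upper_below[of "x / scale n" "a * (1 + e)" N m] x e a_pos scale_pos[OF n0]
    by (simp add: nm)
  also have "\<dots> = exp (- (x powr \<delta> / (1 + e)) * ((real n - N) / n))"
    unfolding rate using nm n0 by (simp add: field_simps)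
  finally have "tail_on n (x / scale n) (below N n (a * (1 + e)))
      \<le> exp (- (x powr \<delta> / (1 + e)) * ((real n - N) / n))" .
  then show ?thesis
    using tail_split[of n "x / scale n" N "a * (1 + e)"] scaled_tail_eq[OF n0] by simp
qed

lemma eventually_scale_large:
  assumes x: "0 \<le> x"
  shows "eventually (\<lambda>n. x / scale n < 1) sequentially"
proof -
  have "eventually (\<lambda>n. x powr \<delta> * (a / c) < real n) sequentially"
    using filterlim_real_sequentially by (simp add: filterlim_at_top_dense)
  then show ?thesis
  proof (rule eventually_mono)
    fix n assume n: "x powr \<delta> * (a / c) < real n"
    then have "0 < n" using a_pos c_pos
      by (metis of_nat_0_less_iff le_less_trans divide_nonneg_nonneg less_eq_real_def
          mult_nonneg_nonneg powr_ge_zero)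
    moreover have "x powr \<delta> < c / a * real n" using n a_pos c_pos by (simp add: field_simps)
    then have "x < scale n"
      unfolding scale_def using less_powr_inverse_iff[of x "c / a * real n" \<delta>] x \<delta>_pos a_pos c_pos
      by simp
    ultimately show "x / scale n < 1" using scale_pos by simp
  qed
qed

lemma scaled_tail_liminf:
  assumes x: "0 \<le> x" and z: "z < exp (- (x powr \<delta>))"
  shows "eventually (\<lambda>n. z < scaled_tail n x) sequentially"
proof -
  have "(\<lambda>n. (1 + (- (x powr \<delta>)) / real n) ^ n) \<longlonglongrightarrow> exp (- (x powr \<delta>))"
    by (rule tendsto_exp_limit_sequentially)
  then have "eventually (\<lambda>n. z < (1 - x powr \<delta> / real n) ^ n) sequentially"
    using z by (auto dest: order_tendstoD(1))
  moreover have "eventually (\<lambda>n. max 1 (x powr \<delta>) \<le> real n) sequentially"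
    by (rule filterlim_real_sequentially[unfolded filterlim_at_top, rule_format])
  ultimately show ?thesis using eventually_scale_large[OF x]
  proof eventually_elim
    case (elim n)
    then have n: "0 < n" and "x powr \<delta> \<le> real n" by auto
    then have "x powr \<delta> / real n \<le> 1" by simp
    then show ?case using scaled_tail_lower[OF n x elim(3)] elim(1) by linarith
  qed
qed

lemma scaled_tail_limsup:
  assumes x: "0 \<le> x" and z: "exp (- (x powr \<delta>)) < z"
  shows "eventually (\<lambda>n. scaled_tail n x < z) sequentially"
proof -
  define d where "d = z - exp (- (x powr \<delta>))"
  have d: "0 < d" using z by (simp add: d_def)
  text \<open>First choose e > 0 with exp (- x^\<delta> / (1 + e)) close to exp (- x^\<delta>) \<dots>\<close>
  have "(\<lambda>j. exp (- (x powr \<delta> / (1 + inverse (real (Suc j)))))) \<longlonglongrightarrow> exp (- (x powr \<delta> / (1 + 0)))"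
    by (intro tendsto_intros LIMSEQ_inverse_real_of_nat) auto
  then have "eventually (\<lambda>j. exp (- (x powr \<delta> / (1 + inverse (real (Suc j)))))
      < exp (- (x powr \<delta>)) + d / 2) sequentially"
    using d by (intro order_tendstoD(2)) auto
  then obtain j where close: "exp (- (x powr \<delta> / (1 + inverse (real (Suc j)))))
      < exp (- (x powr \<delta>)) + d / 2"
    by (auto simp: eventually_sequentially)
  define e where "e = inverse (real (Suc j))"
  have e: "0 < e" by (simp add: e_def)
  have close: "exp (- (x powr \<delta> / (1 + e))) < exp (- (x powr \<delta>)) + d / 2"
    using close by (simp add: e_def)
  text \<open>\<dots> then a time N after which a n \<le> a (1 + e) except on an event of small probability.\<close>
  have "a < a * (1 + e)" using e a_pos by simp
  from prob_exceed_tendsto_0[OF this] d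
  have "eventually (\<lambda>N. prob (exceed N (a * (1 + e))) < d / 4) sequentially"
    by (intro order_tendstoD(2)) auto
  then obtain N where N: "prob (exceed N (a * (1 + e))) < d / 4"
    by (auto simp: eventually_sequentially)
  text \<open>Finally the burn-in ratio (n - N) / n becomes close to 1.\<close>
  have "(\<lambda>n. exp (- (x powr \<delta> / (1 + e)) * ((real n - N) / n)))
      \<longlonglongrightarrow> exp (- (x powr \<delta> / (1 + e)) * 1)"
    by (intro tendsto_intros ratio_shift_tendsto_1)
  then have "eventually (\<lambda>n. exp (- (x powr \<delta> / (1 + e)) * ((real n - N) / n))
      < exp (- (x powr \<delta> / (1 + e))) + d / 4) sequentially"
    using d by (intro order_tendstoD(2)) auto
  with eventually_gt_at_top[of N] show ?thesis
  proof eventually_elim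
    case (elim n)
    have "scaled_tail n x
        \<le> exp (- (x powr \<delta> / (1 + e)) * ((real n - N) / n)) + prob (exceed N (a * (1 + e)))"
      using scaled_tail_upper[OF elim(1) x e] .
    also have "\<dots> < z" using elim(2) close N d_def by linarith
    finally show ?case .
  qed
qed

lemma scaled_tail_tendsto:
  assumes "0 \<le> x"
  shows "(\<lambda>n. scaled_tail n x) \<longlonglongrightarrow> exp (- (x powr \<delta>))"
  using scaled_tail_liminf[OF assms] scaled_tail_limsup[OF assms] by (rule order_tendstoI)

lemma weak_convergence:
  "weak_conv (\<lambda>n. cdf (distr M borel (\<lambda>x. (c / a * real n) powr (1 / \<delta>) * l n x))) (weibull_cdf \<delta>)"
  using weak_conv_weibull_from_tails[OF prob_space_M _ \<delta>_pos, of "\<lambda>n x. scale n * l n x"]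
    scaled_tail_tendsto
  by (simp add: scale_def scaled_tail_def less_imp_le)

lemma tail_scaled_power:
  assumes u: "0 \<le> u"
  shows "measure M {x\<in>space M. u < (scale n * l n x) powr \<delta>} = scaled_tail n (u powr (1 / \<delta>))"
  unfolding scaled_tail_def
proof (rule measure_eq_AE)
  show "AE x in M. x \<in> {x\<in>space M. u < (scale n * l n x) powr \<delta>}
      \<longleftrightarrow> x \<in> {x\<in>space M. u powr (1 / \<delta>) < scale n * l n x}"
    using AE_l_nonneg
  proof eventually_elim
    case (elim x)
    then have "0 \<le> scale n * l n x" using scale_nonneg by simp
    then show ?case
      using less_powr_inverse_iff[of "u powr (1 / \<delta>)" "(scale n * l n x) powr \<delta>" \<delta>] u \<delta>_pos
      by (simp add: powr_powr)
  qed
qed measurable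

lemma moment_scaled_power:
  "expectation (\<lambda>x. (c / a * real n) powr (\<alpha> / \<delta>) * l n x powr \<alpha>)
     = (\<integral>x. ((scale n * l n x) powr \<delta>) powr (\<alpha> / \<delta>) \<partial>M)"
proof (rule integral_cong_AE)
  show "AE x in M. (c / a * real n) powr (\<alpha> / \<delta>) * l n x powr \<alpha>
      = ((scale n * l n x) powr \<delta>) powr (\<alpha> / \<delta>)"
    using AE_l_nonneg
  proof eventually_elim
    case (elim x)
    have "((scale n * l n x) powr \<delta>) powr (\<alpha> / \<delta>) = (scale n * l n x) powr \<alpha>"
      using \<delta>_pos by (simp add: powr_powr)
    also have "\<dots> = scale n powr \<alpha> * l n x powr \<alpha>"
      using elim scale_nonneg by (simp add: powr_mult)
    also have "scale n powr \<alpha> = (c / a * real n) powr (\<alpha> / \<delta>)"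
      by (simp add: scale_def powr_powr)
    finally show ?case by simp
  qed
qed measurable

lemma moment_convergence:
  assumes \<alpha>: "0 < \<alpha>"
  shows "(\<lambda>n. expectation (\<lambda>x. (c / a * real n) powr (\<alpha> / \<delta>) * l n x powr \<alpha>))
           \<longlonglongrightarrow> \<alpha> / \<delta> * Gamma (\<alpha> / \<delta>)"
  unfolding moment_scaled_power
proof (rule moments_from_exponential_tails)
  show "finite_measure M" by (rule finite_measure_axioms)
  show "AE x in M. 0 \<le> (scale n * l n x) powr \<delta>" for n by simp
  show "(\<lambda>n. measure M {x\<in>space M. u < (scale n * l n x) powr \<delta>}) \<longlonglongrightarrow> exp (- u)" if "0 \<le> u" for u
    using scaled_tail_tendsto[of "u powr (1 / \<delta>)"] that \<delta>_pos by (simp add: tail_scaled_power powr_powr)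
  show "measure M {x\<in>space M. u < (scale n * l n x) powr \<delta>} \<le> exp (- (a / as_bound * u))"
    if "0 \<le> u" for n u
    using scaled_tail_bound[of "u powr (1 / \<delta>)" n] that \<delta>_pos by (simp add: tail_scaled_power powr_powr)
  show "0 < a / as_bound" using a_pos as_bound_pos by simp
  show "0 < \<alpha> / \<delta>" using \<alpha> \<delta>_pos by simp
qed measurable

end

theorem lemma3:
  fixes M :: "'w measure" and F :: "nat \<Rightarrow> 'w measure"
    and as l \<omega> V :: "nat \<Rightarrow> 'w \<Rightarrow> real"
    and \<delta> c a :: real
  assumes "prob_space M"
    and "\<delta> > 0" and "c > 0" and "a > 0"
    and subalg: "\<And>n. subalgebra M (F n)"
    and filt: "filtration (space M) F"
    and meas_as: "\<And>n. as n \<in> borel_measurable (F n)"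
    and meas_l: "\<And>n. l n \<in> borel_measurable (F n)"
    and meas_\<omega>: "\<And>n. \<omega> (Suc n) \<in> borel_measurable (F (Suc n))"
    and meas_V: "\<And>n. V (Suc n) \<in> borel_measurable (F (Suc n))"
    and as_nonneg: "\<And>n x. x \<in> space M \<Longrightarrow> as n x \<ge> 0"
    and as_bdd: "\<exists>B. \<forall>n. \<forall>x\<in>space M. as n x \<le> B"
    and as_lim: "AE x in M. decseq (\<lambda>n. as n x) \<and> (\<lambda>n. as n x) \<longlonglongrightarrow> a"
    and l0: "\<And>x. x \<in> space M \<Longrightarrow> l 0 x = 1"
    and p_range: "\<And>n x. x \<in> space M \<Longrightarrow>
                    c * l n x powr \<delta> / as n x \<in> {0..1}"
    and cond1: "\<And>n A y. A \<in> sets (F n) \<Longrightarrow> y \<in> {0..1} \<Longrightarrow>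
        measure M (A \<inter> {x \<in> space M. \<omega> (Suc n) x = 1 \<and> V (Suc n) x \<le> y})
          = (\<integral>x. indicator A x * (c * l n x powr \<delta> / as n x) \<partial>M) * y powr \<delta>"
    and cond0: "\<And>n A y. A \<in> sets (F n) \<Longrightarrow> y \<in> {0..1} \<Longrightarrow>
        measure M (A \<inter> {x \<in> space M. \<omega> (Suc n) x = 0 \<and> V (Suc n) x \<le> y})
          = (\<integral>x. indicator A x * (1 - c * l n x powr \<delta> / as n x) \<partial>M) * y powr \<delta>"
    and rec1: "\<And>n x. x \<in> space M \<Longrightarrow> \<omega> (Suc n) x = 1 \<Longrightarrow>
                 l (Suc n) x = l n x * V (Suc n) x"
    and rec0: "\<And>n x. x \<in> space M \<Longrightarrow> \<omega> (Suc n) x = 0 \<Longrightarrow>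
                 l (Suc n) x = l n x"
  shows "weak_conv
           (\<lambda>n. cdf (distr M borel (\<lambda>x. (c / a * real n) powr (1 / \<delta>) * l n x)))
           (weibull_cdf \<delta>)
       \<and> (\<forall>\<alpha>>0. (\<lambda>n. prob_space.expectation M
                     (\<lambda>x. (c / a * real n) powr (\<alpha> / \<delta>) * l n x powr \<alpha>))
                \<longlonglongrightarrow> \<alpha> / \<delta> * Gamma (\<alpha> / \<delta>))"
proof -
  interpret weibull_recursion M F as l \<omega> V \<delta> c a
    by (rule weibull_recursion.intro) (fact assms)+
  show ?thesis by (intro conjI allI impI weak_convergence moment_convergence)
qed

end
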